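(* Let $k\ge 1$ and $n$ be integers, and let $H$ be the $k\times k$ complex matrix whose $i$-th row ($1\le i\le k$) is $v((n+k+i-1)_{k+1})-v((n+k+i-1)_{k})$. Then the nullity of $H$ equals the number of cycles (loops included) in the directed graph $G(n,k)$.
   Context: For an integer $\ell$, $\ell_k$ and $\ell_{k+1}$ denote the least nonnegative residues of $\ell$ modulo $k$ and $k+1$. Let $\xi$ be a complex primitive $(k+1)$-th root of unity and $v(\ell)=(\xi^{\ell},\xi^{2\ell},\dots,\xi^{k\ell})\in\mathbb{C}^k$. $G(n,k)$ is the directed graph on vertices $0,1,\dots,k$ whose edges are exactly the $k$ edges $E(i): (i+n-2)_{k+1}\to(i+n-1)_k$, $1\le i\le k$; equivalently $a\to b$ is an edge iff $v(a)-v(b)$ is a row of $H$. An edge $a\to a$ is a loop and counts as a cycle of length $1$. In the paper the nullity of $H$ equals $N(n,k)$, where for $n>k$, $N(n,k)$ is the nullity of the $n\times n$ skew-symmetric Toeplitz matrix $A(n,k)$ whose first $k$ superdiagonals have all entries $1$ and remaining superdiagonals all entries $0$. *)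

theory Defs
  imports "Jordan_Normal_Form.Matrix_Kernel"
begin

definition res :: "int \<Rightarrow> nat \<Rightarrow> nat" where
  "res l m = nat (l mod int m)"

definition prim_root :: "nat \<Rightarrow> complex \<Rightarrow> bool" where
  "prim_root m \<xi> \<longleftrightarrow> \<xi> ^ m = 1 \<and> (\<forall>j. 0 < j \<and> j < m \<longrightarrow> \<xi> ^ j \<noteq> 1)"

(* the k x k matrix H: row i (0-based, i.e. row i+1 of the paper), column j (0-based) is
   the (j+1)-th coordinate of v((n+k+(i+1)-1)_{k+1}) - v((n+k+(i+1)-1)_k),
   where v(l) = (xi^l, xi^(2l), ..., xi^(kl)) *)
definition Hmat :: "complex \<Rightarrow> int \<Rightarrow> nat \<Rightarrow> complex mat" where
  "Hmat \<xi> n k = mat k k (\<lambda>(i, j).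
      \<xi> ^ ((j + 1) * res (n + int k + int i) (k + 1))
    - \<xi> ^ ((j + 1) * res (n + int k + int i) k))"

definition G_edge :: "int \<Rightarrow> nat \<Rightarrow> nat \<Rightarrow> nat \<Rightarrow> bool" where
  "G_edge n k a b \<longleftrightarrow>
     (\<exists>i::nat. 1 \<le> i \<and> i \<le> k \<and> a = res (int i + n - 2) (k + 1) \<and> b = res (int i + n - 1) k)"

(* a (simple) directed cycle, given as a nonempty list of distinct vertices x_0,...,x_{m-1}
   with edges x_j -> x_{j+1 mod m}; m = 1 is a loop *)
definition is_cycle :: "(nat \<Rightarrow> nat \<Rightarrow> bool) \<Rightarrow> nat set \<Rightarrow> nat list \<Rightarrow> bool" where
  "is_cycle E V xs \<longleftrightarrow> xs \<noteq> [] \<and> distinct xs \<and> set xs \<subseteq> V \<and>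
     (\<forall>j < length xs. E (xs ! j) (xs ! ((j + 1) mod length xs)))"

(* number of cycles: each cycle counted once, normalising the rotation so that the
   list starts at its least vertex *)
definition num_cycles :: "(nat \<Rightarrow> nat \<Rightarrow> bool) \<Rightarrow> nat set \<Rightarrow> nat" where
  "num_cycles E V = card {xs. is_cycle E V xs \<and> hd xs = Min (set xs)}"

end

theory Submission
  imports Defs
begin

text \<open>
  Every vertex of \<open>G(n,k)\<close> except \<open>s = (n - 2)\<^sub>k\<^sub>+\<^sub>1\<close> is the tail of exactly one edge, so
  \<open>G(n,k)\<close> is a functional digraph with a single sink \<open>s\<close>: its weak components are the tree
  draining into \<open>s\<close> and one basin around each cycle. With the discrete Fourier transform
  \<open>F\<^sub>u(l) = \<Sum>\<^sub>j u\<^sub>j \<xi>\<^bsup>jl\<^esup>\<close> of \<open>u \<in> \<complex>\<^sup>k\<close>, the row of \<open>H\<close> belonging to the edge \<open>a \<rightarrow> b\<close> maps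
  \<open>u\<close> to \<open>F\<^sub>u(a) - F\<^sub>u(b)\<close>, so \<open>u\<close> lies in the kernel iff \<open>F\<^sub>u\<close> is constant on components.
  Since \<open>u \<mapsto> F\<^sub>u\<close> is an isomorphism onto the functions on \<open>{0..k}\<close> with sum zero, the nullity
  is the number of components minus one, i.e. the number of cycles; concretely the inverse
  transforms of the indicator functions of the basins form a basis of the kernel.
\<close>

section \<open>Kernel dimension from an explicit basis\<close>

lemma (in kernel) kernel_dim_eq_card_basis:
  assumes fin: "finite W" and sub: "W \<subseteq> mat_kernel A"
    and indep: "\<And>c. (\<And>j. j < nc \<Longrightarrow> (\<Sum>w\<in>W. c w * w $ j) = 0) \<Longrightarrow> \<forall>w\<in>W. c w = 0"
    and spans: "\<And>v. v \<in> mat_kernel A \<Longrightarrow> \<exists>c. \<forall>j<nc. v $ j = (\<Sum>w\<in>W. c w * w $ j)"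
  shows "kernel_dim A = card W"
proof -
  have "lin_indpt W"
  proof (rule Ker.finite_lin_indpt2[OF fin sub])
    fix a assume "lincomb a W = 0\<^sub>v nc"
    then have "\<And>j. j < nc \<Longrightarrow> (\<Sum>w\<in>W. a w * w $ j) = 0"
      using lincomb_index[OF _ sub] by (metis index_zero_vec(1))
    then show "\<forall>v\<in>W. a v = 0" using indep by blast
  qed
  moreover have "span W = mat_kernel A"
  proof
    show "span W \<subseteq> mat_kernel A" using sub by (rule Ker.span_is_subset2)
    show "mat_kernel A \<subseteq> span W"
    proof
      fix v assume v: "v \<in> mat_kernel A"
      from spans[OF v] obtain c where c: "\<forall>j<nc. v $ j = (\<Sum>w\<in>W. c w * w $ j)" by blast
      have "dim_vec (lincomb c W) = nc" "dim_vec v = nc"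
        using Ker.lincomb_closed[OF sub] v A by (auto simp: mat_kernel_def)
      then have "v = lincomb c W"
        using c lincomb_index[OF _ sub] by (intro eq_vecI) auto
      then show "v \<in> span W" unfolding Ker.span_def using fin by blast
    qed
  qed
  ultimately have "basis W" unfolding Ker.basis_def using sub by auto
  then show ?thesis using Ker.dim_basis[OF fin] by simp
qed

lemma (in kernel) kernel_dim_eq_card_family:
  assumes fin: "finite I" and sub: "w ` I \<subseteq> mat_kernel A"
    and indep: "\<And>c. (\<And>j. j < nc \<Longrightarrow> (\<Sum>i\<in>I. c i * w i $ j) = 0) \<Longrightarrow> \<forall>i\<in>I. c i = 0"
    and spans: "\<And>v. v \<in> mat_kernel A \<Longrightarrow> \<exists>c. \<forall>j<nc. v $ j = (\<Sum>i\<in>I. c i * w i $ j)"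
  shows "kernel_dim A = card I"
proof -
  have inj: "inj_on w I"
  proof (rule inj_onI, rule ccontr)
    fix i i' assume i: "i \<in> I" "i' \<in> I" and eq: "w i = w i'" and ne: "i \<noteq> i'"
    define c where "c x = (if x = i then 1 else 0) - (if x = i' then 1 else (0 :: 'a))" for x
    have "(\<Sum>x\<in>I. c x * w x $ j) = w i $ j - w i' $ j" for j
    proof -
      have "(\<Sum>x\<in>I. c x * w x $ j)
          = (\<Sum>x\<in>I. (if x = i then w x $ j else 0) - (if x = i' then w x $ j else 0))"
        by (intro sum.cong) (auto simp: c_def)
      then show ?thesis using fin i by (simp add: sum_subtractf)
    qed
    then have "\<forall>x\<in>I. c x = 0" using eq by (intro indep) simp
    then show False using i ne by (auto simp: c_def)
  qed
  have "kernel_dim A = card (w ` I)"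
  proof (rule kernel_dim_eq_card_basis)
    show "finite (w ` I)" "w ` I \<subseteq> mat_kernel A" using fin sub by auto
  next
    fix c assume c: "\<And>j. j < nc \<Longrightarrow> (\<Sum>x\<in>w ` I. c x * x $ j) = 0"
    have "\<forall>i\<in>I. c (w i) = 0"
      by (rule indep) (use c in \<open>simp add: sum.reindex[OF inj]\<close>)
    then show "\<forall>x\<in>w ` I. c x = 0" by blast
  next
    fix v assume "v \<in> mat_kernel A"
    then obtain c where c: "\<forall>j<nc. v $ j = (\<Sum>i\<in>I. c i * w i $ j)" using spans by blast
    show "\<exists>c'. \<forall>j<nc. v $ j = (\<Sum>x\<in>w ` I. c' x * x $ j)"
    proof (intro exI allI impI)
      fix j assume "j < nc"
      then show "v $ j = (\<Sum>x\<in>w ` I. c (the_inv_into I w x) * x $ j)"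
        using c by (simp add: sum.reindex[OF inj] the_inv_into_f_f[OF inj])
    qed
  qed
  then show ?thesis using card_image[OF inj] by simp
qed

section \<open>Discrete Fourier transform at a primitive root of unity\<close>

lemma sum_powers_root_of_unity:
  fixes z :: "'a :: field"
  assumes "z ^ Suc k = 1"
  shows "(\<Sum>i\<le>k. z ^ i) = (if z = 1 then of_nat (Suc k) else 0)"
  using sum_gp_strict[of z "Suc k"] assms by (simp add: lessThan_Suc_atMost)

locale primitive_root_dft =
  fixes k :: nat and \<xi> :: complex
  assumes primitive: "prim_root (k + 1) \<xi>"
begin

definition dft :: "(nat \<Rightarrow> complex) \<Rightarrow> nat \<Rightarrow> complex" where
  "dft u l = (\<Sum>j<k. u j * \<xi> ^ ((j + 1) * l))"

definition idft :: "(nat \<Rightarrow> complex) \<Rightarrow> nat \<Rightarrow> complex" where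
  "idft f j = (\<Sum>l\<le>k. f l / \<xi> ^ ((j + 1) * l))"

lemma xi_power_order: "\<xi> ^ (k + 1) = 1"
  using primitive by (simp add: prim_root_def)

lemma xi_nonzero: "\<xi> \<noteq> 0"
  using xi_power_order by (metis add_is_0 one_neq_zero power_0_left zero_neq_one)

lemma xi_power_eq_iff:
  assumes "a \<le> k" "b \<le> k"
  shows "\<xi> ^ a = \<xi> ^ b \<longleftrightarrow> a = b"
proof
  assume eq: "\<xi> ^ a = \<xi> ^ b"
  have False if "c < d" "d \<le> k" "\<xi> ^ c = \<xi> ^ d" for c d
  proof -
    have "\<xi> ^ c * \<xi> ^ (d - c) = \<xi> ^ (c + (d - c))" by (rule power_add[symmetric])
    also have "\<dots> = \<xi> ^ c * 1" using that by simp
    finally have "\<xi> ^ (d - c) = 1" using xi_nonzero by simp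
    then show False using primitive that unfolding prim_root_def by auto
  qed
  with eq assms show "a = b" by (metis linorder_neqE_nat)
qed simp

lemma sum_quotient_powers:
  assumes "a \<le> k" "b \<le> k"
  shows "(\<Sum>i\<le>k. (\<xi> ^ a / \<xi> ^ b) ^ i) = (if a = b then of_nat (k + 1) else 0)"
proof -
  have "(\<xi> ^ a / \<xi> ^ b) ^ Suc k = (\<xi> ^ Suc k) ^ a / (\<xi> ^ Suc k) ^ b"
    by (simp only: power_divide power_mult[symmetric] mult.commute)
  then have "(\<xi> ^ a / \<xi> ^ b) ^ Suc k = 1" using xi_power_order by simp
  moreover have "\<xi> ^ a / \<xi> ^ b = 1 \<longleftrightarrow> a = b"
    using xi_power_eq_iff[OF assms] xi_nonzero by simp
  ultimately show ?thesis by (simp add: sum_powers_root_of_unity)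
qed

lemma orthogonality_freqs:
  assumes "l \<le> k" "m \<le> k"
  shows "(\<Sum>j<k. \<xi> ^ ((j + 1) * l) / \<xi> ^ ((j + 1) * m)) = (if l = m then of_nat (k + 1) else 0) - 1"
proof -
  define z where "z = \<xi> ^ l / \<xi> ^ m"
  have "(\<Sum>j<k. \<xi> ^ ((j + 1) * l) / \<xi> ^ ((j + 1) * m)) = (\<Sum>j<k. z ^ Suc j)"
    unfolding z_def by (simp only: power_divide power_mult[symmetric] mult.commute Suc_eq_plus1)
  also have "\<dots> = (\<Sum>i\<le>k. z ^ i) - 1"
    by (simp add: sum.atMost_shift)
  finally show ?thesis using sum_quotient_powers[OF assms] by (simp add: z_def)
qed

lemma orthogonality_points:
  assumes "j < k" "j' < k"
  shows "(\<Sum>l\<le>k. \<xi> ^ ((j' + 1) * l) / \<xi> ^ ((j + 1) * l)) = (if j = j' then of_nat (k + 1) else 0)"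
proof -
  have "(\<Sum>l\<le>k. \<xi> ^ ((j' + 1) * l) / \<xi> ^ ((j + 1) * l))
      = (\<Sum>l\<le>k. (\<xi> ^ (j' + 1) / \<xi> ^ (j + 1)) ^ l)"
    by (simp only: power_mult power_divide)
  then show ?thesis using sum_quotient_powers[of "j' + 1" "j + 1"] assms by auto
qed

lemma sum_inverse_powers:
  assumes "j < k"
  shows "(\<Sum>l\<le>k. 1 / \<xi> ^ ((j + 1) * l)) = 0"
proof -
  have "(\<Sum>l\<le>k. 1 / \<xi> ^ ((j + 1) * l)) = (\<Sum>l\<le>k. (\<xi> ^ 0 / \<xi> ^ (j + 1)) ^ l)"
    by (simp only: power_mult power_divide power_0 power_one)
  then show ?thesis using sum_quotient_powers[of 0 "j + 1"] assms by simp
qed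

lemma dft_idft:
  assumes "l \<le> k"
  shows "dft (idft f) l = of_nat (k + 1) * f l - (\<Sum>m\<le>k. f m)"
proof -
  have "dft (idft f) l = (\<Sum>j<k. \<Sum>m\<le>k. f m * (\<xi> ^ ((j + 1) * l) / \<xi> ^ ((j + 1) * m)))"
    unfolding dft_def idft_def by (simp add: sum_distrib_right)
  also have "\<dots> = (\<Sum>m\<le>k. f m * (\<Sum>j<k. \<xi> ^ ((j + 1) * l) / \<xi> ^ ((j + 1) * m)))"
    by (simp only: sum_distrib_left) (rule sum.swap)
  also have "\<dots> = (\<Sum>m\<le>k. (if m = l then of_nat (k + 1) * f l else 0) - f m)"
  proof (intro sum.cong refl)
    fix m assume "m \<in> {..k}"
    then have "m \<le> k" by simp
    then show "f m * (\<Sum>j<k. \<xi> ^ ((j + 1) * l) / \<xi> ^ ((j + 1) * m))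
        = (if m = l then of_nat (k + 1) * f l else 0) - f m"
      unfolding orthogonality_freqs[OF assms \<open>m \<le> k\<close>] by (auto simp: algebra_simps)
  qed
  also have "\<dots> = of_nat (k + 1) * f l - (\<Sum>m\<le>k. f m)"
    using assms by (simp add: sum_subtractf)
  finally show ?thesis .
qed

lemma idft_dft:
  assumes "j < k"
  shows "idft (dft u) j = of_nat (k + 1) * u j"
proof -
  have "idft (dft u) j = (\<Sum>l\<le>k. \<Sum>j'<k. u j' * (\<xi> ^ ((j' + 1) * l) / \<xi> ^ ((j + 1) * l)))"
    unfolding dft_def idft_def by (simp add: sum_divide_distrib)
  also have "\<dots> = (\<Sum>j'<k. u j' * (\<Sum>l\<le>k. \<xi> ^ ((j' + 1) * l) / \<xi> ^ ((j + 1) * l)))"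
    by (simp only: sum_distrib_left) (rule sum.swap)
  also have "\<dots> = (\<Sum>j'<k. if j' = j then of_nat (k + 1) * u j else 0)"
  proof (intro sum.cong refl)
    fix j' assume "j' \<in> {..<k}"
    then show "u j' * (\<Sum>l\<le>k. \<xi> ^ ((j' + 1) * l) / \<xi> ^ ((j + 1) * l))
        = (if j' = j then of_nat (k + 1) * u j else 0)"
      using orthogonality_points[OF assms, of j'] by auto
  qed
  finally show ?thesis using assms by simp
qed

lemma idft_const:
  assumes "j < k"
  shows "idft (\<lambda>_. c) j = 0"
proof -
  have "idft (\<lambda>_. c) j = c * (\<Sum>l\<le>k. 1 / \<xi> ^ ((j + 1) * l))"
    unfolding idft_def by (simp add: sum_distrib_left)
  then show ?thesis using sum_inverse_powers[OF assms] by simp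
qed

lemma idft_cong: "(\<And>l. l \<le> k \<Longrightarrow> f l = f' l) \<Longrightarrow> idft f j = idft f' j"
  unfolding idft_def by (intro sum.cong) auto

lemma idft_add: "idft (\<lambda>l. f l + f' l) j = idft f j + idft f' j"
  unfolding idft_def by (simp add: add_divide_distrib sum.distrib)

lemma idft_lincomb: "idft (\<lambda>l. \<Sum>x\<in>X. c x * h x l) j = (\<Sum>x\<in>X. c x * idft (h x) j)"
  unfolding idft_def by (simp add: sum_divide_distrib sum_distrib_left sum.swap[of _ X] mult.assoc)

lemma dft_lincomb: "dft (\<lambda>j. \<Sum>x\<in>X. c x * h x j) l = (\<Sum>x\<in>X. c x * dft (h x) l)"
  unfolding dft_def by (simp add: sum_distrib_left sum_distrib_right sum.swap[of _ X] mult.assoc)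

lemma dft_cong: "(\<And>j. j < k \<Longrightarrow> u j = u' j) \<Longrightarrow> dft u l = dft u' l"
  unfolding dft_def by (intro sum.cong) auto

end

section \<open>Functional digraphs with a sink\<close>

locale sink_digraph =
  fixes E :: "nat \<Rightarrow> nat \<Rightarrow> bool" and g :: "nat \<Rightarrow> nat" and s K :: nat
  assumes edge_iff: "E a b \<longleftrightarrow> a \<le> K \<and> a \<noteq> s \<and> b = g a"
    and succ_le: "a \<le> K \<Longrightarrow> g a \<le> K"
    and sink_le: "s \<le> K"
    and succ_sink: "g s = s"
begin

definition cycles :: "nat list set" where
  "cycles = {xs. is_cycle E {0..K} xs \<and> hd xs = Min (set xs)}"

definition basin :: "nat list \<Rightarrow> nat set" where
  "basin xs = {l. l \<le> K \<and> (\<exists>m. (g ^^ m) l \<in> set xs)}"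

lemma card_cycles: "card cycles = num_cycles E {0..K}"
  by (simp add: cycles_def num_cycles_def)

lemma funpow_succ_le: "a \<le> K \<Longrightarrow> (g ^^ m) a \<le> K"
  by (induction m) (auto simp: succ_le)

lemma funpow_sink: "(g ^^ m) s = s"
  by (induction m) (auto simp: succ_sink)

lemma cycle_nth:
  assumes c: "is_cycle E {0..K} xs" and j: "j < length xs"
  shows "xs ! j = (g ^^ j) (hd xs)"
  using j
proof (induction j)
  case 0
  then show ?case using c by (simp add: is_cycle_def hd_conv_nth)
next
  case (Suc j)
  then have "j < length xs" by simp
  then have "E (xs ! j) (xs ! ((j + 1) mod length xs))" using c unfolding is_cycle_def by blast
  then have "xs ! Suc j = g (xs ! j)" using Suc.prems by (simp add: edge_iff)
  then show ?case using Suc by simp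
qed

lemma cycle_succ:
  assumes c: "is_cycle E {0..K} xs" and x: "x \<in> set xs"
  shows "g x \<in> set xs" and "x \<noteq> s"
proof -
  obtain j where j: "j < length xs" "xs ! j = x" using x by (auto simp: in_set_conv_nth)
  then have "E x (xs ! ((j + 1) mod length xs))" using c unfolding is_cycle_def by auto
  then have "g x = xs ! ((j + 1) mod length xs)" and "x \<noteq> s" by (auto simp: edge_iff)
  moreover have "(j + 1) mod length xs < length xs" using j(1) by (intro mod_less_divisor) linarith
  ultimately show "g x \<in> set xs" "x \<noteq> s" by auto
qed

lemma cycle_funpow:
  assumes "is_cycle E {0..K} xs" and "x \<in> set xs"
  shows "(g ^^ m) x \<in> set xs"
  by (induction m) (auto simp: assms cycle_succ)

lemma cycle_period:
  assumes c: "is_cycle E {0..K} xs"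
  shows "(g ^^ length xs) (hd xs) = hd xs"
proof -
  obtain L where L: "length xs = Suc L" using c by (cases xs) (auto simp: is_cycle_def)
  have "\<forall>j<length xs. E (xs ! j) (xs ! ((j + 1) mod length xs))" using c by (simp add: is_cycle_def)
  moreover have "L < length xs" using L by simp
  ultimately have "E (xs ! L) (xs ! ((L + 1) mod length xs))" by blast
  then have "g (xs ! L) = hd xs" using L c by (simp add: edge_iff is_cycle_def hd_conv_nth)
  then show ?thesis using cycle_nth[OF c, of L] L by simp
qed

lemma cycle_eq_orbit:
  assumes c: "is_cycle E {0..K} xs" and x: "x \<in> set xs"
  shows "set xs = range (\<lambda>m. (g ^^ m) x)"
proof
  show "range (\<lambda>m. (g ^^ m) x) \<subseteq> set xs" using cycle_funpow[OF c x] by auto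
  show "set xs \<subseteq> range (\<lambda>m. (g ^^ m) x)"
  proof
    fix y assume "y \<in> set xs"
    obtain i where i: "i < length xs" "x = (g ^^ i) (hd xs)"
      using x cycle_nth[OF c] by (auto simp: in_set_conv_nth)
    obtain j where j: "y = (g ^^ j) (hd xs)"
      using \<open>y \<in> set xs\<close> cycle_nth[OF c] by (auto simp: in_set_conv_nth)
    have "(g ^^ (length xs - i)) x = (g ^^ (length xs - i + i)) (hd xs)"
      unfolding i(2) by (simp only: funpow_add comp_apply)
    also have "\<dots> = hd xs" using i(1) cycle_period[OF c] by simp
    finally have "y = (g ^^ (j + (length xs - i))) x" using j by (simp add: funpow_add)
    then show "y \<in> range (\<lambda>m. (g ^^ m) x)" by blast
  qed
qed

lemma cycles_eq_if_common_vertex: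
  assumes xs: "xs \<in> cycles" and ys: "ys \<in> cycles" and x: "x \<in> set xs" "x \<in> set ys"
  shows "xs = ys"
proof -
  have cx: "is_cycle E {0..K} xs" "hd xs = Min (set xs)"
    and cy: "is_cycle E {0..K} ys" "hd ys = Min (set ys)"
    using xs ys by (auto simp: cycles_def)
  have "set xs = set ys" using cycle_eq_orbit[OF cx(1) x(1)] cycle_eq_orbit[OF cy(1) x(2)] by simp
  moreover from this have "length xs = length ys"
    using cx(1) cy(1) by (simp add: is_cycle_def flip: distinct_card)
  ultimately show ?thesis
    using cx cy by (intro nth_equalityI) (simp_all add: cycle_nth)
qed

lemma finite_cycles: "finite cycles"
proof (rule finite_subset)
  show "cycles \<subseteq> {xs. set xs \<subseteq> {0..K} \<and> length xs \<le> Suc K}"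
  proof
    fix xs assume "xs \<in> cycles"
    then have c: "is_cycle E {0..K} xs" by (simp add: cycles_def)
    then have "length xs = card (set xs)" by (simp add: is_cycle_def distinct_card)
    also have "\<dots> \<le> card {0..K}" using c by (intro card_mono) (auto simp: is_cycle_def)
    finally show "xs \<in> {xs. set xs \<subseteq> {0..K} \<and> length xs \<le> Suc K}"
      using c by (simp add: is_cycle_def)
  qed
  show "finite {xs. set xs \<subseteq> {0..K} \<and> length xs \<le> Suc K}"
    by (rule finite_lists_length_le) simp
qed

lemma basin_le: "l \<in> basin xs \<Longrightarrow> l \<le> K"
  by (simp add: basin_def)

lemma succ_in_basin_iff:
  assumes xs: "xs \<in> cycles" and a: "a \<le> K"
  shows "g a \<in> basin xs \<longleftrightarrow> a \<in> basin xs"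
proof -
  have "(\<exists>m. (g ^^ m) (g a) \<in> set xs) \<longleftrightarrow> (\<exists>m. (g ^^ m) a \<in> set xs)"
  proof
    assume "\<exists>m. (g ^^ m) (g a) \<in> set xs"
    then obtain m where "(g ^^ m) (g a) \<in> set xs" by blast
    then have "(g ^^ Suc m) a \<in> set xs" by (simp only: funpow_Suc_right comp_apply)
    then show "\<exists>m. (g ^^ m) a \<in> set xs" by blast
  next
    assume "\<exists>m. (g ^^ m) a \<in> set xs"
    then obtain m where "(g ^^ m) a \<in> set xs" by blast
    then have "g ((g ^^ m) a) \<in> set xs" using xs cycle_succ(1) by (auto simp: cycles_def)
    then have "(g ^^ m) (g a) \<in> set xs" by (simp add: funpow_swap1)
    then show "\<exists>m. (g ^^ m) (g a) \<in> set xs" by blast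
  qed
  then show ?thesis using a succ_le[OF a] by (simp add: basin_def)
qed

lemma sink_notin_basin: "xs \<in> cycles \<Longrightarrow> s \<notin> basin xs"
  using cycle_succ(2) by (auto simp: basin_def funpow_sink cycles_def)

lemma hd_in_basin:
  assumes "xs \<in> cycles"
  shows "hd xs \<in> basin xs"
proof -
  have "xs \<noteq> []" "set xs \<subseteq> {0..K}" using assms by (auto simp: cycles_def is_cycle_def)
  then have "hd xs \<in> set xs" by simp
  with \<open>set xs \<subseteq> {0..K}\<close> have "hd xs \<le> K" "(g ^^ 0) (hd xs) \<in> set xs" by auto
  then show ?thesis unfolding basin_def by blast
qed

lemma cycles_eq_if_basins_meet:
  assumes xs: "xs \<in> cycles" and ys: "ys \<in> cycles" and l: "l \<in> basin xs" "l \<in> basin ys"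
  shows "xs = ys"
proof -
  obtain m p where m: "(g ^^ m) l \<in> set xs" and p: "(g ^^ p) l \<in> set ys"
    using l by (auto simp: basin_def)
  have "(g ^^ (p + m)) l \<in> set xs"
    using cycle_funpow[OF _ m, of p] xs by (simp add: funpow_add cycles_def)
  moreover have "(g ^^ (p + m)) l \<in> set ys"
    using cycle_funpow[OF _ p, of m] ys by (simp add: funpow_add add.commute cycles_def)
  ultimately show ?thesis using cycles_eq_if_common_vertex[OF xs ys] by blast
qed

lemma hd_in_basin_iff:
  assumes "xs \<in> cycles" "ys \<in> cycles"
  shows "hd xs \<in> basin ys \<longleftrightarrow> ys = xs"
proof
  assume "hd xs \<in> basin ys"
  then show "ys = xs" by (rule cycles_eq_if_basins_meet[OF assms(2,1) _ hd_in_basin[OF assms(1)]])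
qed (use hd_in_basin[OF assms(1)] in simp)

lemma eventually_periodic:
  assumes l: "l \<le> K"
  obtains a p where "0 < p" "(g ^^ p) ((g ^^ a) l) = (g ^^ a) l"
proof -
  have "\<not> inj_on (\<lambda>m. (g ^^ m) l) {0..Suc K}"
  proof
    assume inj: "inj_on (\<lambda>m. (g ^^ m) l) {0..Suc K}"
    have "(\<lambda>m. (g ^^ m) l) ` {0..Suc K} \<subseteq> {0..K}" using funpow_succ_le[OF l] by auto
    then have "card ((\<lambda>m. (g ^^ m) l) ` {0..Suc K}) \<le> card {0..K}" by (intro card_mono) auto
    then show False using card_image[OF inj] by simp
  qed
  then obtain i j where "i \<noteq> j" "(g ^^ i) l = (g ^^ j) l" unfolding inj_on_def by blast
  then obtain a b where ab: "a < b" "(g ^^ a) l = (g ^^ b) l" by (metis linorder_neqE_nat)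
  have "(g ^^ (b - a)) ((g ^^ a) l) = (g ^^ (b - a + a)) l" by (simp only: funpow_add comp_apply)
  also have "\<dots> = (g ^^ a) l" using ab by simp
  finally show ?thesis using that[of "b - a" a] ab(1) by simp
qed

lemma orbit_is_cycle:
  assumes w: "w \<le> K" and p: "0 < p" "(g ^^ p) w = w"
    and minimal: "\<And>r. 0 < r \<Longrightarrow> r < p \<Longrightarrow> (g ^^ r) w \<noteq> w"
    and avoids_sink: "\<And>m. (g ^^ m) w \<noteq> s"
  shows "is_cycle E {0..K} (map (\<lambda>j. (g ^^ j) w) [0..<p])"
proof -
  define xs where "xs = map (\<lambda>j. (g ^^ j) w) [0..<p]"
  have "(g ^^ c) w \<noteq> (g ^^ d) w" if "c \<in> {0..<p}" "d \<in> {0..<p}" "c < d" for c d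
  proof
    assume eq: "(g ^^ c) w = (g ^^ d) w"
    have "(g ^^ (p - d + c)) w = (g ^^ (p - d)) ((g ^^ c) w)" by (simp only: funpow_add comp_apply)
    also have "\<dots> = (g ^^ (p - d + d)) w" unfolding eq by (simp only: funpow_add comp_apply)
    also have "\<dots> = w" using that p by simp
    finally have "(g ^^ (p - d + c)) w = w" .
    moreover have r: "0 < p - d + c" "p - d + c < p" using that by auto
    ultimately show False using minimal[OF r] by blast
  qed
  then have "inj_on (\<lambda>j. (g ^^ j) w) {0..<p}" by (rule linorder_inj_onI')
  then have "distinct xs" by (simp add: xs_def distinct_map)
  have len: "length xs = p" and nth: "\<And>j. j < p \<Longrightarrow> xs ! j = (g ^^ j) w"
    by (simp_all add: xs_def)
  have "E (xs ! j) (xs ! ((j + 1) mod length xs))" if "j < length xs" for j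
  proof -
    have j: "j < p" using that len by simp
    have "xs ! ((j + 1) mod p) = (g ^^ Suc j) w"
    proof (cases "Suc j = p")
      case True
      then show ?thesis using p nth[of 0] by simp
    next
      case False
      then show ?thesis using j nth[of "Suc j"] by simp
    qed
    then show ?thesis using j len nth[OF j] funpow_succ_le[OF w] avoids_sink by (simp add: edge_iff)
  qed
  moreover have "set xs \<subseteq> {0..K}" using funpow_succ_le[OF w] by (auto simp: xs_def)
  moreover have "xs \<noteq> []" using len p(1) by auto
  ultimately show ?thesis using \<open>distinct xs\<close> unfolding is_cycle_def xs_def by blast
qed

lemma periodic_point_in_basin:
  assumes w: "w \<le> K" and p: "0 < p" "(g ^^ p) w = w" and avoids_sink: "\<And>m. (g ^^ m) w \<noteq> s"
  obtains xs where "xs \<in> cycles" "w \<in> basin xs"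
proof -
  define orb where "orb = range (\<lambda>m. (g ^^ m) w)"
  have orb: "orb \<subseteq> {0..K}" "orb \<noteq> {}" using funpow_succ_le[OF w] by (auto simp: orb_def)
  then have "finite orb" using finite_subset by blast
  define v where "v = Min orb"
  obtain q where q: "v = (g ^^ q) w" using Min_in[OF \<open>finite orb\<close> orb(2)] unfolding v_def orb_def by auto
  have "(g ^^ p) v = (g ^^ (q + p)) w" by (simp add: q funpow_add add.commute)
  also have "\<dots> = v" using p(2) by (simp add: q funpow_add)
  finally have "(g ^^ p) v = v" .
  then have "\<exists>p. 0 < p \<and> (g ^^ p) v = v" using p(1) by blast
  define p0 where "p0 = (LEAST p. 0 < p \<and> (g ^^ p) v = v)"
  have p0: "0 < p0" "(g ^^ p0) v = v" and p0_min: "\<And>r. 0 < r \<Longrightarrow> r < p0 \<Longrightarrow> (g ^^ r) v \<noteq> v"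
    using LeastI_ex[OF \<open>\<exists>p. _\<close>] not_less_Least unfolding p0_def by blast+
  define xs where "xs = map (\<lambda>j. (g ^^ j) v) [0..<p0]"
  have v: "v \<le> K" using orb Min_in[OF \<open>finite orb\<close> orb(2)] unfolding v_def by auto
  have "(g ^^ m) v \<noteq> s" for m using avoids_sink[of "m + q"] by (simp add: q funpow_add)
  then have cycle: "is_cycle E {0..K} xs" unfolding xs_def using v p0 p0_min by (intro orbit_is_cycle)
  have "(g ^^ j) v = (g ^^ (j + q)) w" for j by (simp add: q funpow_add)
  then have "set xs \<subseteq> orb" by (auto simp: xs_def orb_def)
  moreover have hd: "hd xs = v" and "v \<in> set xs"
    using p0(1) by (auto simp: xs_def hd_map intro!: image_eqI[where x = 0])
  ultimately have "Min (set xs) = v"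
    using \<open>finite orb\<close> unfolding v_def by (intro Min_eqI) (auto intro: Min_le)
  then have "xs \<in> cycles" using cycle hd by (simp add: cycles_def)
  moreover have "(g ^^ q) w \<in> set xs" using \<open>v \<in> set xs\<close> q by simp
  then have "w \<in> basin xs" using w unfolding basin_def by blast
  ultimately show ?thesis using that by blast
qed

lemma in_basin_or_reaches_sink:
  assumes l: "l \<le> K"
  shows "(\<exists>xs\<in>cycles. l \<in> basin xs) \<or> (\<exists>m. (g ^^ m) l = s)"
proof (rule disjCI)
  assume "\<nexists>m. (g ^^ m) l = s"
  then have avoids_sink: "(g ^^ m) l \<noteq> s" for m by blast
  obtain a p where p: "0 < p" "(g ^^ p) ((g ^^ a) l) = (g ^^ a) l"
    using eventually_periodic[OF l] .
  have "(g ^^ m) ((g ^^ a) l) \<noteq> s" for m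
    using avoids_sink[of "m + a"] by (simp add: funpow_add)
  then obtain xs where xs: "xs \<in> cycles" "(g ^^ a) l \<in> basin xs"
    using periodic_point_in_basin[OF funpow_succ_le[OF l] p] by blast
  then obtain m where "(g ^^ m) ((g ^^ a) l) \<in> set xs" by (auto simp: basin_def)
  then have "(g ^^ (m + a)) l \<in> set xs" by (simp add: funpow_add)
  then have "l \<in> basin xs" using l unfolding basin_def by blast
  then show "\<exists>xs\<in>cycles. l \<in> basin xs" using xs(1) by blast
qed

lemma invariant_funpow:
  assumes inv: "\<And>a. a \<le> K \<Longrightarrow> f (g a) = f a" and l: "l \<le> K"
  shows "f ((g ^^ m) l) = f l"
  by (induction m) (auto simp: inv funpow_succ_le l)

lemma invariant_on_basin:
  assumes inv: "\<And>a. a \<le> K \<Longrightarrow> f (g a) = f a" and xs: "xs \<in> cycles" and l: "l \<in> basin xs"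
  shows "f l = f (hd xs)"
proof -
  obtain m where m: "(g ^^ m) l \<in> set xs" using l by (auto simp: basin_def)
  then obtain j where "j < length xs" "(g ^^ m) l = xs ! j" by (auto simp: in_set_conv_nth)
  then have j: "(g ^^ m) l = (g ^^ j) (hd xs)" using xs cycle_nth by (simp add: cycles_def)
  have "f l = f ((g ^^ m) l)" by (rule invariant_funpow[of f, OF inv basin_le[OF l], symmetric])
  also have "\<dots> = f (hd xs)"
    unfolding j by (rule invariant_funpow[of f, OF inv basin_le[OF hd_in_basin[OF xs]]])
  finally show ?thesis .
qed

lemma invariant_decomposition:
  fixes f :: "nat \<Rightarrow> 'a :: ring_1"
  assumes inv: "\<And>a. a \<le> K \<Longrightarrow> f (g a) = f a" and l: "l \<le> K"
  shows "f l = f s + (\<Sum>xs\<in>cycles. (f (hd xs) - f s) * of_bool (l \<in> basin xs))"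
proof (cases "\<exists>xs\<in>cycles. l \<in> basin xs")
  case True
  then obtain xs where xs: "xs \<in> cycles" "l \<in> basin xs" by blast
  have "(\<Sum>ys\<in>cycles. (f (hd ys) - f s) * of_bool (l \<in> basin ys))
      = (\<Sum>ys\<in>cycles. if ys = xs then f (hd xs) - f s else 0)"
  proof (rule sum.cong[OF refl])
    fix ys assume "ys \<in> cycles"
    then have "l \<in> basin ys \<longleftrightarrow> ys = xs"
      using cycles_eq_if_basins_meet[OF \<open>ys \<in> cycles\<close> xs(1) _ xs(2)] xs(2) by auto
    then show "(f (hd ys) - f s) * of_bool (l \<in> basin ys) = (if ys = xs then f (hd xs) - f s else 0)"
      by simp
  qed
  also have "\<dots> = f (hd xs) - f s" using xs(1) finite_cycles by simp
  finally show ?thesis using invariant_on_basin[of f, OF inv xs] by simp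
next
  case False
  then obtain m where "(g ^^ m) l = s" using in_basin_or_reaches_sink[OF l] by blast
  then have "f l = f s" using invariant_funpow[of f, OF inv l, of m] by simp
  moreover have "(\<Sum>xs\<in>cycles. (f (hd xs) - f s) * of_bool (l \<in> basin xs)) = 0"
    using False by (intro sum.neutral) auto
  ultimately show ?thesis by simp
qed

end

section \<open>The digraph \<open>G(n,k)\<close> and the kernel of \<open>H\<close>\<close>

lemma res_less: "0 < m \<Longrightarrow> res x m < m"
  unfolding res_def by (simp add: nat_less_iff)

lemma res_add_res: "0 < m \<Longrightarrow> res (int (res x m) + y) m = res (x + y) m"
  unfolding res_def by (simp add: mod_add_left_eq)

lemma res_of_nat: "a < m \<Longrightarrow> res (int a) m = a"
  unfolding res_def by (simp flip: of_nat_mod)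

lemma res_add_modulus: "res (x + int m) m = res x m"
  unfolding res_def by simp

definition G_sink :: "int \<Rightarrow> nat \<Rightarrow> nat" where
  "G_sink n k = res (n - 2) (k + 1)"

text \<open>
  Every vertex \<open>a \<le> k\<close> is \<open>(i + n - 2)\<^sub>k\<^sub>+\<^sub>1\<close> for \<open>i = G_label n k a\<close>. The edges \<open>E(i)\<close> carry the labels
  \<open>1 \<le> i \<le> k\<close>; the remaining label \<open>0\<close> is that of the sink.
\<close>

definition G_label :: "int \<Rightarrow> nat \<Rightarrow> nat \<Rightarrow> nat" where
  "G_label n k a = res (int a - n + 2) (k + 1)"

definition G_succ :: "int \<Rightarrow> nat \<Rightarrow> nat \<Rightarrow> nat" where
  "G_succ n k a = (if a = G_sink n k then a else res (int (G_label n k a) + n - 1) k)"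

lemma G_label_inverse: "a \<le> k \<Longrightarrow> res (int (G_label n k a) + n - 2) (k + 1) = a"
  using res_add_res[of "k + 1" "int a - n + 2" "n - 2"]
  by (simp add: G_label_def res_of_nat add_diff_eq)

lemma G_label_res: "i \<le> k \<Longrightarrow> G_label n k (res (int i + n - 2) (k + 1)) = i"
  using res_add_res[of "k + 1" "int i + n - 2" "2 - n"]
  by (simp add: G_label_def res_of_nat add_diff_eq diff_add_eq)

lemma G_label_eq_0_iff: "a \<le> k \<Longrightarrow> G_label n k a = 0 \<longleftrightarrow> a = G_sink n k"
  using G_label_inverse[of a k n] G_label_res[of 0 k n] by (auto simp: G_sink_def)

lemma G_edge_iff_succ:
  "G_edge n k a b \<longleftrightarrow> a \<le> k \<and> a \<noteq> G_sink n k \<and> b = G_succ n k a"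
proof
  assume "G_edge n k a b"
  then obtain i where i: "1 \<le> i" "i \<le> k" "a = res (int i + n - 2) (k + 1)" "b = res (int i + n - 1) k"
    unfolding G_edge_def by blast
  then have "a \<le> k" using res_less[of "k + 1"] by (simp add: less_Suc_eq_le)
  moreover have "G_label n k a = i" using G_label_res[of i k n] i by simp
  ultimately show "a \<le> k \<and> a \<noteq> G_sink n k \<and> b = G_succ n k a"
    using i G_label_eq_0_iff[of a k n] by (auto simp: G_succ_def)
next
  assume a: "a \<le> k \<and> a \<noteq> G_sink n k \<and> b = G_succ n k a"
  define i where "i = G_label n k a"
  have "i \<le> k" using res_less[of "k + 1"] by (simp add: i_def G_label_def less_Suc_eq_le)
  moreover have "1 \<le> i" using a G_label_eq_0_iff[of a k n] by (simp add: i_def)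
  moreover have "a = res (int i + n - 2) (k + 1)" using a G_label_inverse[of a k n] by (simp add: i_def)
  moreover have "b = res (int i + n - 1) k" using a by (simp add: i_def G_succ_def)
  ultimately show "G_edge n k a b" unfolding G_edge_def by blast
qed

text \<open>Row \<open>i\<close> of \<open>Hmat\<close> (counting from \<open>0\<close>) belongs to the edge \<open>E(i + 1)\<close>.\<close>

lemma G_edge_iff_row:
  "G_edge n k a b \<longleftrightarrow> (\<exists>i<k. a = res (n + int k + int i) (k + 1) \<and> b = res (n + int k + int i) k)"
proof -
  have row: "res (n + int k + int i) (k + 1) = res (int (i + 1) + n - 2) (k + 1)"
    "res (n + int k + int i) k = res (int (i + 1) + n - 1) k" for i
    using res_add_modulus[of "int (i + 1) + n - 2" "k + 1"] res_add_modulus[of "int (i + 1) + n - 1" k]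
    by (simp_all add: algebra_simps)
  show ?thesis
  proof
    assume "G_edge n k a b"
    then obtain i where "1 \<le> i" "i \<le> k" "a = res (int i + n - 2) (k + 1)" "b = res (int i + n - 1) k"
      unfolding G_edge_def by blast
    then show "\<exists>i<k. a = res (n + int k + int i) (k + 1) \<and> b = res (n + int k + int i) k"
      using row[of "i - 1"] by (intro exI[of _ "i - 1"]) simp
  next
    assume "\<exists>i<k. a = res (n + int k + int i) (k + 1) \<and> b = res (n + int k + int i) k"
    then obtain i where "i < k" "a = res (n + int k + int i) (k + 1)" "b = res (n + int k + int i) k"
      by blast
    then show "G_edge n k a b" unfolding G_edge_def using row[of i] by (intro exI[of _ "i + 1"]) simp
  qed
qed

lemma sink_digraph_G:
  assumes "1 \<le> k"
  shows "sink_digraph (G_edge n k) (G_succ n k) (G_sink n k) k"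
proof
  show "G_edge n k a b \<longleftrightarrow> a \<le> k \<and> a \<noteq> G_sink n k \<and> b = G_succ n k a" for a b
    by (rule G_edge_iff_succ)
  show "G_succ n k a \<le> k" if "a \<le> k" for a
    using that res_less[of k] assms by (simp add: G_succ_def less_imp_le)
  show "G_sink n k \<le> k"
    using res_less[of "k + 1"] by (simp add: G_sink_def less_Suc_eq_le)
  show "G_succ n k (G_sink n k) = G_sink n k"
    by (simp add: G_succ_def)
qed

context primitive_root_dft
begin

lemma Hmat_mult_vec:
  assumes u: "u \<in> carrier_vec k" and i: "i < k"
  shows "(Hmat \<xi> n k *\<^sub>v u) $ i
    = dft (($) u) (res (n + int k + int i) (k + 1)) - dft (($) u) (res (n + int k + int i) k)"
proof -
  have "(Hmat \<xi> n k *\<^sub>v u) $ i = (\<Sum>j<k. row (Hmat \<xi> n k) i $ j * u $ j)"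
    using u i by (simp add: Hmat_def scalar_prod_def atLeast0LessThan)
  also have "\<dots> = (\<Sum>j<k. (\<xi> ^ ((j + 1) * res (n + int k + int i) (k + 1))
        - \<xi> ^ ((j + 1) * res (n + int k + int i) k)) * u $ j)"
    using i by (intro sum.cong) (auto simp: Hmat_def)
  finally show ?thesis
    unfolding dft_def by (simp add: sum_subtractf algebra_simps)
qed

lemma Hmat_kernel_iff:
  assumes u: "u \<in> carrier_vec k"
  shows "u \<in> mat_kernel (Hmat \<xi> n k) \<longleftrightarrow> (\<forall>a b. G_edge n k a b \<longrightarrow> dft (($) u) a = dft (($) u) b)"
proof -
  have "u \<in> mat_kernel (Hmat \<xi> n k) \<longleftrightarrow> (\<forall>i<k. (Hmat \<xi> n k *\<^sub>v u) $ i = 0)"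
    using u by (auto simp: mat_kernel_def Hmat_def vec_eq_iff)
  also have "\<dots> \<longleftrightarrow> (\<forall>i<k. dft (($) u) (res (n + int k + int i) (k + 1))
      = dft (($) u) (res (n + int k + int i) k))"
    using Hmat_mult_vec[OF u] by simp
  also have "\<dots> \<longleftrightarrow> (\<forall>a b. G_edge n k a b \<longrightarrow> dft (($) u) a = dft (($) u) b)"
    unfolding G_edge_iff_row by blast
  finally show ?thesis .
qed

end

locale Hmat_graph = primitive_root_dft k \<xi> for k \<xi> +
  fixes n :: int
  assumes k_pos: "1 \<le> k"

sublocale Hmat_graph \<subseteq> G: sink_digraph "G_edge n k" "G_succ n k" "G_sink n k" k
  by (rule sink_digraph_G[OF k_pos])

context Hmat_graph
begin

definition basin_vec :: "nat list \<Rightarrow> complex vec" where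
  "basin_vec xs = vec k (idft (\<lambda>l. of_bool (l \<in> G.basin xs)))"

lemma dft_basin_vec:
  assumes "l \<le> k"
  shows "dft (($) (basin_vec xs)) l
    = of_nat (k + 1) * of_bool (l \<in> G.basin xs) - of_nat (card (G.basin xs))"
proof -
  have "G.basin xs \<subseteq> {..k}" using G.basin_le by auto
  then have "(\<Sum>m\<le>k. of_bool (m \<in> G.basin xs)) = (of_nat (card (G.basin xs)) :: complex)"
    by (simp add: sum.inter_restrict[symmetric] of_bool_def Int_absorb1)
  moreover have "dft (($) (basin_vec xs)) l = dft (idft (\<lambda>l. of_bool (l \<in> G.basin xs))) l"
    unfolding basin_vec_def by (rule dft_cong) simp
  ultimately show ?thesis using assms by (simp add: dft_idft)
qed

lemma basin_vec_in_kernel: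
  assumes xs: "xs \<in> G.cycles"
  shows "basin_vec xs \<in> mat_kernel (Hmat \<xi> n k)"
proof -
  have "dft (($) (basin_vec xs)) a = dft (($) (basin_vec xs)) b" if "G_edge n k a b" for a b
  proof -
    have a: "a \<le> k" "b = G_succ n k a" using that G.edge_iff by auto
    then have "b \<le> k" using G.succ_le by simp
    moreover have "b \<in> G.basin xs \<longleftrightarrow> a \<in> G.basin xs" using a G.succ_in_basin_iff[OF xs] by simp
    ultimately show ?thesis using a(1) by (simp add: dft_basin_vec)
  qed
  then show ?thesis by (simp add: Hmat_kernel_iff basin_vec_def)
qed

lemma basin_vecs_independent:
  assumes zero: "\<And>j. j < k \<Longrightarrow> (\<Sum>xs\<in>G.cycles. c xs * basin_vec xs $ j) = 0"
  shows "\<forall>xs\<in>G.cycles. c xs = 0"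
proof
  have combination: "(\<Sum>xs\<in>G.cycles. c xs * of_nat (k + 1) * of_bool (l \<in> G.basin xs))
      = (\<Sum>xs\<in>G.cycles. c xs * of_nat (card (G.basin xs)))" if "l \<le> k" for l
  proof -
    have "(\<Sum>xs\<in>G.cycles. c xs * dft (($) (basin_vec xs)) l) = dft (\<lambda>j. \<Sum>xs\<in>G.cycles. c xs * basin_vec xs $ j) l"
      by (rule dft_lincomb[symmetric])
    also have "\<dots> = 0" using zero by (simp add: dft_def)
    finally show ?thesis
      using that by (simp add: dft_basin_vec right_diff_distrib sum_subtractf mult.assoc)
  qed
  fix ys assume ys: "ys \<in> G.cycles"
  \<comment> \<open>Evaluate at \<open>hd ys\<close>, which lies in the basin of \<open>ys\<close> only, and at the sink, which lies in none.\<close>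
  have "(\<Sum>xs\<in>G.cycles. c xs * of_nat (k + 1) * of_bool (hd ys \<in> G.basin xs))
      = (\<Sum>xs\<in>G.cycles. if xs = ys then c ys * of_nat (k + 1) else 0)"
    using G.hd_in_basin_iff[OF ys] by (intro sum.cong) auto
  also have "\<dots> = c ys * of_nat (k + 1)" using ys G.finite_cycles by simp
  finally have "c ys * of_nat (k + 1) = (\<Sum>xs\<in>G.cycles. c xs * of_nat (card (G.basin xs)))"
    using combination[of "hd ys"] G.basin_le[OF G.hd_in_basin[OF ys]] by simp
  also have "\<dots> = 0"
    using combination[OF G.sink_le] G.sink_notin_basin by simp
  finally show "c ys = 0" by (simp del: of_nat_Suc)
qed

lemma basin_vecs_span:
  assumes v: "v \<in> mat_kernel (Hmat \<xi> n k)"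
  shows "\<exists>c. \<forall>j<k. v $ j = (\<Sum>xs\<in>G.cycles. c xs * basin_vec xs $ j)"
proof -
  have "v \<in> carrier_vec k" using v by (simp add: mat_kernel_def Hmat_def)
  define f where "f = dft (($) v)"
  have edge: "f a = f b" if "G_edge n k a b" for a b
    using v that Hmat_kernel_iff[OF \<open>v \<in> carrier_vec k\<close>] unfolding f_def by blast
  have inv: "f (G_succ n k a) = f a" if "a \<le> k" for a
    using that edge[of a "G_succ n k a"] G.edge_iff G.succ_sink by (cases "a = G_sink n k") auto
  define s where "s = G_sink n k"
  define c where "c xs = (f (hd xs) - f s) / of_nat (k + 1)" for xs
  have "v $ j = (\<Sum>xs\<in>G.cycles. c xs * basin_vec xs $ j)" if "j < k" for j
  proof -
    have "of_nat (k + 1) * v $ j = idft f j" using idft_dft[OF that] by (simp add: f_def)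
    also have "\<dots> = idft (\<lambda>l. f s + (\<Sum>xs\<in>G.cycles. (f (hd xs) - f s) * of_bool (l \<in> G.basin xs))) j"
      unfolding s_def using G.invariant_decomposition[of f, OF inv] by (rule idft_cong)
    also have "\<dots> = (\<Sum>xs\<in>G.cycles. (f (hd xs) - f s) * basin_vec xs $ j)"
      using that by (simp add: idft_add idft_lincomb idft_const basin_vec_def)
    also have "\<dots> = of_nat (k + 1) * (\<Sum>xs\<in>G.cycles. c xs * basin_vec xs $ j)"
      by (simp add: c_def sum_distrib_left del: of_nat_Suc)
    finally show ?thesis by (simp del: of_nat_Suc)
  qed
  then show ?thesis by blast
qed

lemma kernel_dim_Hmat: "kernel_dim (Hmat \<xi> n k) = card G.cycles"
proof -
  interpret kernel k k "Hmat \<xi> n k" by unfold_locales (simp add: Hmat_def)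
  show ?thesis
  proof (rule kernel_dim_eq_card_family)
    show "finite G.cycles" by (rule G.finite_cycles)
    show "basin_vec ` G.cycles \<subseteq> mat_kernel (Hmat \<xi> n k)" using basin_vec_in_kernel by blast
  qed (use basin_vecs_independent basin_vecs_span in auto)
qed

end

theorem theorem2p1:
  fixes k :: nat and n :: int and \<xi> :: complex
  assumes "k \<ge> 1" and "prim_root (k + 1) \<xi>"
  shows "kernel_dim (Hmat \<xi> n k) = num_cycles (G_edge n k) {0..k}"
proof -
  interpret Hmat_graph k \<xi> n by unfold_locales (use assms in auto)
  show ?thesis using kernel_dim_Hmat G.card_cycles by simp
qed

end
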